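(* Let $O$ be a Cayley algebra over a field $F$ of characteristic $\neq2$ and $H$ a 4-dimensional subalgebra of $O$. Then $\operatorname{im}(H)$ contains a 2-dimensional subspace $T$ of type Q, M, D or J, and $H=\langle T\rangle$.
   Context: Cayley algebra: $D_\gamma(D_\beta(D_\alpha(F)))$, $\alpha,\beta,\gamma\in F^\times$, with $D_\gamma(A)=A\oplus A$ (elements $a+ib$), $(a+ib)(c+id)=(ac+\gamma db^* )+i(a^*d+cb)$, $(a+ib)^*=a^*-ib$, starting from $F$ with identity involution; $\operatorname{im}(H)=\{a\in H:a^*=-a\}$; subalgebras contain $1$. Nilpotent line: 1-dimensional subspace of nilpotent elements. Types of 2-dimensional $U\subseteq\operatorname{im}(O)$: Q if no nilpotent line; U if exactly one nilpotent line $Fu$ and $uv\in Fu$ for all $v\in U$; D if exactly one nilpotent line but not type U; M if exactly two nilpotent lines; Z if all elements nilpotent and all products zero; J if all elements nilpotent but not type Z. *)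

theory Defs
  imports "HOL-Analysis.Analysis" "HOL-Library.Product_Plus"
begin

text \<open>Doubling D_g(A) = A x A, elements (a,b) standing for a + ib, with
  (a+ib)(c+id) = (ac + g d b^*) + i(a^* d + c b) and (a+ib)^* = a^* - ib.\<close>

definition cd_mult :: "('b \<Rightarrow> 'b \<Rightarrow> 'b) \<Rightarrow> ('b \<Rightarrow> 'b) \<Rightarrow> ('f \<Rightarrow> 'b \<Rightarrow> 'b) \<Rightarrow> 'f
    \<Rightarrow> ('b::ab_group_add) \<times> 'b \<Rightarrow> 'b \<times> 'b \<Rightarrow> 'b \<times> 'b" where
  "cd_mult m cj s g x y =
     (m (fst x) (fst y) + s g (m (snd y) (cj (snd x))),
      m (cj (fst x)) (snd y) + m (fst y) (snd x))"

definition cd_conj :: "('b \<Rightarrow> 'b) \<Rightarrow> ('b::ab_group_add) \<times> 'b \<Rightarrow> 'b \<times> 'b" where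
  "cd_conj cj x = (cj (fst x), - snd x)"

definition cd_scale :: "('f \<Rightarrow> 'b \<Rightarrow> 'b) \<Rightarrow> 'f \<Rightarrow> 'b \<times> 'b \<Rightarrow> 'b \<times> 'b" where
  "cd_scale s k x = (s k (fst x), s k (snd x))"

definition mult1 :: "'a::field \<Rightarrow> 'a \<times> 'a \<Rightarrow> 'a \<times> 'a \<Rightarrow> 'a \<times> 'a" where
  "mult1 \<alpha> = cd_mult (*) id (*) \<alpha>"
definition conj1 :: "'a::field \<times> 'a \<Rightarrow> 'a \<times> 'a" where
  "conj1 = cd_conj id"
definition scale1 :: "'a::field \<Rightarrow> 'a \<times> 'a \<Rightarrow> 'a \<times> 'a" where
  "scale1 = cd_scale (*)"

definition mult2 :: "'a::field \<Rightarrow> 'a \<Rightarrow> ('a \<times> 'a) \<times> ('a \<times> 'a)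
    \<Rightarrow> ('a \<times> 'a) \<times> ('a \<times> 'a) \<Rightarrow> ('a \<times> 'a) \<times> ('a \<times> 'a)" where
  "mult2 \<alpha> \<beta> = cd_mult (mult1 \<alpha>) conj1 scale1 \<beta>"
definition conj2 :: "('a::field \<times> 'a) \<times> ('a \<times> 'a) \<Rightarrow> ('a \<times> 'a) \<times> ('a \<times> 'a)" where
  "conj2 = cd_conj conj1"
definition scale2 :: "'a::field \<Rightarrow> ('a \<times> 'a) \<times> ('a \<times> 'a) \<Rightarrow> ('a \<times> 'a) \<times> ('a \<times> 'a)" where
  "scale2 = cd_scale scale1"

type_synonym 'a quat = "('a \<times> 'a) \<times> ('a \<times> 'a)"
type_synonym 'a octp = "'a quat \<times> 'a quat"

definition mult3 :: "'a::field \<Rightarrow> 'a \<Rightarrow> 'a \<Rightarrow> 'a octp \<Rightarrow> 'a octp \<Rightarrow> 'a octp" where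
  "mult3 \<alpha> \<beta> \<gamma> = cd_mult (mult2 \<alpha> \<beta>) conj2 scale2 \<gamma>"
definition conj3 :: "'a::field octp \<Rightarrow> 'a octp" where
  "conj3 = cd_conj conj2"

text \<open>We use F^8 (type 'a^8) with the library vector space structure (*s)
  (interpretation vec), transporting the Cayley--Dickson structure.\<close>

definition to_octp :: "'a ^ 8 \<Rightarrow> 'a octp" where
  "to_octp x = (((x$1, x$2), (x$3, x$4)), ((x$5, x$6), (x$7, x$8)))"

definition of_octp :: "'a octp \<Rightarrow> 'a ^ 8" where
  "of_octp p = (\<chi> i. if i = 1 then fst (fst (fst p)) else if i = 2 then snd (fst (fst p))
      else if i = 3 then fst (snd (fst p)) else if i = 4 then snd (snd (fst p))
      else if i = 5 then fst (fst (snd p)) else if i = 6 then snd (fst (snd p))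
      else if i = 7 then fst (snd (snd p)) else snd (snd (snd p)))"

definition omult :: "'a::field \<Rightarrow> 'a \<Rightarrow> 'a \<Rightarrow> 'a ^ 8 \<Rightarrow> 'a ^ 8 \<Rightarrow> 'a ^ 8" where
  "omult \<alpha> \<beta> \<gamma> x y = of_octp (mult3 \<alpha> \<beta> \<gamma> (to_octp x) (to_octp y))"

definition oconj :: "'a::field ^ 8 \<Rightarrow> 'a ^ 8" where
  "oconj x = of_octp (conj3 (to_octp x))"

text \<open>The identity element 1 of the Cayley algebra (NOT the constant vector 1 of 'a^8).\<close>
definition oone :: "'a::field ^ 8" where
  "oone = of_octp (((1, 0), (0, 0)), ((0, 0), (0, 0)))"

definition oim :: "('a::field ^ 8) set \<Rightarrow> ('a ^ 8) set" where
  "oim H = {a \<in> H. oconj a = - a}"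

definition is_subalgebra :: "'a::field \<Rightarrow> 'a \<Rightarrow> 'a \<Rightarrow> ('a ^ 8) set \<Rightarrow> bool" where
  "is_subalgebra \<alpha> \<beta> \<gamma> H \<longleftrightarrow> vec.subspace H \<and> oone \<in> H \<and>
     (\<forall>x\<in>H. \<forall>y\<in>H. omult \<alpha> \<beta> \<gamma> x y \<in> H)"

definition gen_subalgebra :: "'a::field \<Rightarrow> 'a \<Rightarrow> 'a \<Rightarrow> ('a ^ 8) set \<Rightarrow> ('a ^ 8) set" where
  "gen_subalgebra \<alpha> \<beta> \<gamma> T = \<Inter> {H. is_subalgebra \<alpha> \<beta> \<gamma> H \<and> T \<subseteq> H}"

text \<open>Powers (right-multiplied; the Cayley algebra is power-associative) and nilpotency.\<close>
primrec opow :: "'a::field \<Rightarrow> 'a \<Rightarrow> 'a \<Rightarrow> 'a ^ 8 \<Rightarrow> nat \<Rightarrow> 'a ^ 8" where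
  "opow \<alpha> \<beta> \<gamma> x 0 = oone"
| "opow \<alpha> \<beta> \<gamma> x (Suc n) = omult \<alpha> \<beta> \<gamma> (opow \<alpha> \<beta> \<gamma> x n) x"

definition onilpotent :: "'a::field \<Rightarrow> 'a \<Rightarrow> 'a \<Rightarrow> 'a ^ 8 \<Rightarrow> bool" where
  "onilpotent \<alpha> \<beta> \<gamma> x \<longleftrightarrow> (\<exists>n. opow \<alpha> \<beta> \<gamma> x n = 0)"

definition nil_lines :: "'a::field \<Rightarrow> 'a \<Rightarrow> 'a \<Rightarrow> ('a ^ 8) set \<Rightarrow> ('a ^ 8) set set" where
  "nil_lines \<alpha> \<beta> \<gamma> U = {L. vec.subspace L \<and> vec.dim L = 1 \<and> L \<subseteq> U \<and>
      (\<forall>x\<in>L. onilpotent \<alpha> \<beta> \<gamma> x)}"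

definition typeQ :: "'a::field \<Rightarrow> 'a \<Rightarrow> 'a \<Rightarrow> ('a ^ 8) set \<Rightarrow> bool" where
  "typeQ \<alpha> \<beta> \<gamma> U \<longleftrightarrow> nil_lines \<alpha> \<beta> \<gamma> U = {}"

definition typeU :: "'a::field \<Rightarrow> 'a \<Rightarrow> 'a \<Rightarrow> ('a ^ 8) set \<Rightarrow> bool" where
  "typeU \<alpha> \<beta> \<gamma> U \<longleftrightarrow> (\<exists>u. nil_lines \<alpha> \<beta> \<gamma> U = {vec.span {u}} \<and>
      (\<forall>v\<in>U. omult \<alpha> \<beta> \<gamma> u v \<in> vec.span {u}))"

definition typeD :: "'a::field \<Rightarrow> 'a \<Rightarrow> 'a \<Rightarrow> ('a ^ 8) set \<Rightarrow> bool" where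
  "typeD \<alpha> \<beta> \<gamma> U \<longleftrightarrow> (\<exists>L. nil_lines \<alpha> \<beta> \<gamma> U = {L}) \<and> \<not> typeU \<alpha> \<beta> \<gamma> U"

definition typeM :: "'a::field \<Rightarrow> 'a \<Rightarrow> 'a \<Rightarrow> ('a ^ 8) set \<Rightarrow> bool" where
  "typeM \<alpha> \<beta> \<gamma> U \<longleftrightarrow> (\<exists>L1 L2. L1 \<noteq> L2 \<and> nil_lines \<alpha> \<beta> \<gamma> U = {L1, L2})"

definition typeZ :: "'a::field \<Rightarrow> 'a \<Rightarrow> 'a \<Rightarrow> ('a ^ 8) set \<Rightarrow> bool" where
  "typeZ \<alpha> \<beta> \<gamma> U \<longleftrightarrow> (\<forall>x\<in>U. onilpotent \<alpha> \<beta> \<gamma> x) \<and>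
      (\<forall>x\<in>U. \<forall>y\<in>U. omult \<alpha> \<beta> \<gamma> x y = 0)"

definition typeJ :: "'a::field \<Rightarrow> 'a \<Rightarrow> 'a \<Rightarrow> ('a ^ 8) set \<Rightarrow> bool" where
  "typeJ \<alpha> \<beta> \<gamma> U \<longleftrightarrow> (\<forall>x\<in>U. onilpotent \<alpha> \<beta> \<gamma> x) \<and> \<not> typeZ \<alpha> \<beta> \<gamma> U"

end

theory Submission
  imports Defs
begin

text \<open>It suffices to find imaginary x, y in H such that 1, x, y, xy are linearly independent:
  then T = span {x, y} generates H by a dimension count, xy \<noteq> 0 rules out type Z, the
  independence also rules out type U, and three distinct nilpotent lines in T would force the
  norm to vanish on T, giving type J. An orthogonal pair of anisotropic elements of im(H)
  always works. If there is none, im(H) contains a 2-dimensional totally isotropic subspace,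
  and the failure of every candidate pair makes the products of its elements so degenerate
  that an idempotent p of trace 1 built from them has two independent vectors y, z with
  zy = 0 in its Peirce space {v. pv = 0, vp = v}; but there zy = 0 forces y and z to be
  proportional.\<close>

section \<open>Coordinates\<close>

lemma num8_cases: "(i::8) = 1 \<or> i = 2 \<or> i = 3 \<or> i = 4 \<or> i = 5 \<or> i = 6 \<or> i = 7 \<or> i = 8"
proof (induct i)
  case (of_int z)
  then have "z < 8" by simp
  with of_int have "z = 0 \<or> z = 1 \<or> z = 2 \<or> z = 3 \<or> z = 4 \<or> z = 5 \<or> z = 6 \<or> z = 7" by arith
  then show ?case by auto
qed

lemma vec8_eq_iff: "(x::'a^8) = y \<longleftrightarrow>
    x$1 = y$1 \<and> x$2 = y$2 \<and> x$3 = y$3 \<and> x$4 = y$4 \<and> x$5 = y$5 \<and> x$6 = y$6 \<and> x$7 = y$7 \<and> x$8 = y$8"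
  (is "_ \<longleftrightarrow> ?components")
proof
  assume ?components
  show "x = y" unfolding vec_eq_iff
  proof
    fix i :: 8
    from num8_cases[of i] \<open>?components\<close> show "x$i = y$i" by auto
  qed
qed simp

lemma of_octp_component [simp]:
  "of_octp p $ 1 = fst (fst (fst p))" "of_octp p $ 2 = snd (fst (fst p))"
  "of_octp p $ 3 = fst (snd (fst p))" "of_octp p $ 4 = snd (snd (fst p))"
  "of_octp p $ 5 = fst (fst (snd p))" "of_octp p $ 6 = snd (fst (snd p))"
  "of_octp p $ 7 = fst (snd (snd p))" "of_octp p $ 8 = snd (snd (snd p))"
  by (simp_all add: of_octp_def)

lemmas cayley_dickson_defs = omult_def mult3_def mult2_def mult1_def cd_mult_def conj3_def
  conj2_def conj1_def cd_conj_def scale2_def scale1_def cd_scale_def to_octp_def oconj_def oone_def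

lemma omult_component:
  "omult \<alpha> \<beta> \<gamma> x y $ 1 = \<alpha>*\<beta>*\<gamma>*x$8*y$8 - \<alpha>*\<beta>*x$4*y$4 - \<alpha>*\<gamma>*x$6*y$6 + \<alpha>*x$2*y$2
     - \<beta>*\<gamma>*x$7*y$7 + \<beta>*x$3*y$3 + \<gamma>*x$5*y$5 + x$1*y$1"
  "omult \<alpha> \<beta> \<gamma> x y $ 2 = \<beta>*\<gamma>*x$7*y$8 - \<beta>*\<gamma>*x$8*y$7 + \<beta>*x$3*y$4 - \<beta>*x$4*y$3
     + \<gamma>*x$5*y$6 - \<gamma>*x$6*y$5 + x$1*y$2 + x$2*y$1"
  "omult \<alpha> \<beta> \<gamma> x y $ 3 = -\<alpha>*\<gamma>*x$6*y$8 + \<alpha>*\<gamma>*x$8*y$6 - \<alpha>*x$2*y$4 + \<alpha>*x$4*y$2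
     + \<gamma>*x$5*y$7 - \<gamma>*x$7*y$5 + x$1*y$3 + x$3*y$1"
  "omult \<alpha> \<beta> \<gamma> x y $ 4 = \<gamma>*x$5*y$8 - \<gamma>*x$6*y$7 + \<gamma>*x$7*y$6 - \<gamma>*x$8*y$5
     + x$1*y$4 - x$2*y$3 + x$3*y$2 + x$4*y$1"
  "omult \<alpha> \<beta> \<gamma> x y $ 5 = \<alpha>*\<beta>*x$4*y$8 - \<alpha>*\<beta>*x$8*y$4 - \<alpha>*x$2*y$6 + \<alpha>*x$6*y$2
     - \<beta>*x$3*y$7 + \<beta>*x$7*y$3 + x$1*y$5 + x$5*y$1"
  "omult \<alpha> \<beta> \<gamma> x y $ 6 = -\<beta>*x$3*y$8 + \<beta>*x$4*y$7 - \<beta>*x$7*y$4 + \<beta>*x$8*y$3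
     + x$1*y$6 - x$2*y$5 + x$5*y$2 + x$6*y$1"
  "omult \<alpha> \<beta> \<gamma> x y $ 7 = \<alpha>*x$2*y$8 - \<alpha>*x$4*y$6 + \<alpha>*x$6*y$4 - \<alpha>*x$8*y$2
     + x$1*y$7 - x$3*y$5 + x$5*y$3 + x$7*y$1"
  "omult \<alpha> \<beta> \<gamma> x y $ 8 = x$1*y$8 + x$2*y$7 - x$3*y$6 - x$4*y$5 + x$5*y$4 + x$6*y$3
     - x$7*y$2 + x$8*y$1"
  by (simp_all add: cayley_dickson_defs algebra_simps)

lemma oconj_component:
  "oconj x $ 1 = x $ 1" "oconj x $ 2 = - x $ 2" "oconj x $ 3 = - x $ 3" "oconj x $ 4 = - x $ 4"
  "oconj x $ 5 = - x $ 5" "oconj x $ 6 = - x $ 6" "oconj x $ 7 = - x $ 7" "oconj x $ 8 = - x $ 8"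
  by (simp_all add: cayley_dickson_defs)

lemma oone_component:
  "oone $ 1 = 1" "oone $ 2 = 0" "oone $ 3 = 0" "oone $ 4 = 0"
  "oone $ 5 = 0" "oone $ 6 = 0" "oone $ 7 = 0" "oone $ 8 = 0"
  by (simp_all add: cayley_dickson_defs)

lemma oone_neq_zero: "(oone::'a::field^8) \<noteq> 0"
  using oone_component(1)[where 'a='a] by force

text \<open>The polar form of the norm n(x) = x x^*, normalised so that obil x x = n(x).\<close>
definition obil :: "'a::field \<Rightarrow> 'a \<Rightarrow> 'a \<Rightarrow> 'a^8 \<Rightarrow> 'a^8 \<Rightarrow> 'a" where
  "obil \<alpha> \<beta> \<gamma> x y = x$1*y$1 - \<alpha>*x$2*y$2 - \<beta>*x$3*y$3 + \<alpha>*\<beta>*x$4*y$4 - \<gamma>*x$5*y$5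
    + \<alpha>*\<gamma>*x$6*y$6 + \<beta>*\<gamma>*x$7*y$7 - \<alpha>*\<beta>*\<gamma>*x$8*y$8"

definition otr :: "'a::field^8 \<Rightarrow> 'a" where
  "otr x = 2 * x$1"

lemmas component_simps = omult_component oconj_component oone_component obil_def otr_def

lemma oconj_eq: "oconj x = otr x *s oone - x"
  unfolding vec8_eq_iff by (simp add: component_simps)

lemma oconj_oconj [simp]: "oconj (oconj x) = x"
  unfolding vec8_eq_iff by (simp add: component_simps)

lemma otr_add: "otr (x + y) = otr x + otr y"
  by (simp add: otr_def algebra_simps)

lemma obil_sym: "obil \<alpha> \<beta> \<gamma> x y = obil \<alpha> \<beta> \<gamma> y x"
  by (simp add: obil_def algebra_simps)

lemma obil_linear:
  "obil \<alpha> \<beta> \<gamma> (x + z) y = obil \<alpha> \<beta> \<gamma> x y + obil \<alpha> \<beta> \<gamma> z y"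
  "obil \<alpha> \<beta> \<gamma> y (x + z) = obil \<alpha> \<beta> \<gamma> y x + obil \<alpha> \<beta> \<gamma> y z"
  "obil \<alpha> \<beta> \<gamma> (x - z) y = obil \<alpha> \<beta> \<gamma> x y - obil \<alpha> \<beta> \<gamma> z y"
  "obil \<alpha> \<beta> \<gamma> y (x - z) = obil \<alpha> \<beta> \<gamma> y x - obil \<alpha> \<beta> \<gamma> y z"
  "obil \<alpha> \<beta> \<gamma> (k *s x) y = k * obil \<alpha> \<beta> \<gamma> x y"
  "obil \<alpha> \<beta> \<gamma> y (k *s x) = k * obil \<alpha> \<beta> \<gamma> y x"
  "obil \<alpha> \<beta> \<gamma> (- x) y = - obil \<alpha> \<beta> \<gamma> x y"
  "obil \<alpha> \<beta> \<gamma> y (- x) = - obil \<alpha> \<beta> \<gamma> y x"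
  "obil \<alpha> \<beta> \<gamma> 0 y = 0"
  "obil \<alpha> \<beta> \<gamma> y 0 = 0"
  by (simp_all add: component_simps algebra_simps)

lemma obil_oone:
  "obil \<alpha> \<beta> \<gamma> oone y = y $ 1" "obil \<alpha> \<beta> \<gamma> y oone = y $ 1"
  by (simp_all add: component_simps)

lemma obil_oconj: "obil \<alpha> \<beta> \<gamma> (oconj x) (oconj y) = obil \<alpha> \<beta> \<gamma> x y"
  by (simp add: component_simps)

lemma oconj_imaginary: "x $ 1 = 0 \<Longrightarrow> oconj x = - x"
  by (simp add: oconj_eq otr_def)

lemma oim_iff:
  fixes H :: "('a::field ^ 8) set"
  assumes two: "(2::'a) \<noteq> 0"
  shows "x \<in> oim H \<longleftrightarrow> x \<in> H \<and> x $ 1 = 0"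
proof -
  have "oconj x = - x \<longleftrightarrow> x $ 1 = 0"
  proof
    assume "oconj x = - x"
    then have "x $ 1 = - x $ 1" by (metis oconj_component(1) vector_uminus_component)
    then have "2 * x $ 1 = 0" by simp
    then show "x $ 1 = 0" using two by simp
  qed (rule oconj_imaginary)
  then show ?thesis by (simp add: oim_def)
qed

section \<open>Explicit linear independence\<close>

definition lin_indep2 :: "'a::field^'n \<Rightarrow> 'a^'n \<Rightarrow> bool" where
  "lin_indep2 u v \<longleftrightarrow> (\<forall>a b. a *s u + b *s v = 0 \<longrightarrow> a = 0 \<and> b = 0)"

definition lin_indep3 :: "'a::field^'n \<Rightarrow> 'a^'n \<Rightarrow> 'a^'n \<Rightarrow> bool" where
  "lin_indep3 u v w \<longleftrightarrow> (\<forall>a b c. a *s u + b *s v + c *s w = 0 \<longrightarrow> a = 0 \<and> b = 0 \<and> c = 0)"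

definition lin_indep4 :: "'a::field^'n \<Rightarrow> 'a^'n \<Rightarrow> 'a^'n \<Rightarrow> 'a^'n \<Rightarrow> bool" where
  "lin_indep4 u v w z \<longleftrightarrow>
    (\<forall>a b c d. a *s u + b *s v + c *s w + d *s z = 0 \<longrightarrow> a = 0 \<and> b = 0 \<and> c = 0 \<and> d = 0)"

lemma lin_indep2_sym: "lin_indep2 u v \<Longrightarrow> lin_indep2 v u"
  unfolding lin_indep2_def by (metis add.commute)

lemma lin_indep2_nonzero:
  assumes "lin_indep2 u v"
  shows "u \<noteq> 0" "v \<noteq> 0" "u + v \<noteq> 0"
  using assms[unfolded lin_indep2_def, rule_format, of 1 0]
    assms[unfolded lin_indep2_def, rule_format, of 0 1]
    assms[unfolded lin_indep2_def, rule_format, of 1 1] by auto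

lemma lin_indep3_imp_lin_indep2:
  assumes "lin_indep3 u v w"
  shows "lin_indep2 u v" "lin_indep2 u w" "lin_indep2 v w"
  using assms unfolding lin_indep3_def lin_indep2_def
  by (metis add.right_neutral add.left_neutral vector_smult_lzero)+

lemma lin_indep2_independent:
  assumes "lin_indep2 u v"
  shows "vec.independent {u, v}" and "card {u, v} = 2"
proof -
  have "u \<noteq> v" using assms[unfolded lin_indep2_def, rule_format, of 1 "-1"] by auto
  then show "card {u, v} = 2" by simp
  show "vec.independent {u, v}"
    unfolding vec.independent_explicit
  proof (intro conjI allI impI)
    fix f assume "(\<Sum>w\<in>{u, v}. f w *s w) = 0"
    then have "f u *s u + f v *s v = 0" using \<open>u \<noteq> v\<close> by simp
    then show "\<forall>w\<in>{u, v}. f w = 0" using assms unfolding lin_indep2_def by blast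
  qed simp
qed

lemma lin_indep4_independent:
  assumes "lin_indep4 u v w z"
  shows "vec.independent {u, v, w, z}" and "card {u, v, w, z} = 4"
proof -
  note ind = assms[unfolded lin_indep4_def, rule_format]
  have distinct: "u \<noteq> v" "u \<noteq> w" "u \<noteq> z" "v \<noteq> w" "v \<noteq> z" "w \<noteq> z"
    using ind[of 1 "-1" 0 0] ind[of 1 0 "-1" 0] ind[of 1 0 0 "-1"]
      ind[of 0 1 "-1" 0] ind[of 0 1 0 "-1"] ind[of 0 0 1 "-1"] by auto
  then show "card {u, v, w, z} = 4" by simp
  show "vec.independent {u, v, w, z}"
    unfolding vec.independent_explicit
  proof (intro conjI allI impI)
    fix f assume "(\<Sum>t\<in>{u, v, w, z}. f t *s t) = 0"
    then have "f u *s u + f v *s v + f w *s w + f z *s z = 0"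
      using distinct by (simp add: add.assoc)
    then show "\<forall>t\<in>{u, v, w, z}. f t = 0" using ind by blast
  qed simp
qed

lemma span_pair_iff: "t \<in> vec.span {u, v} \<longleftrightarrow> (\<exists>a b. t = a *s u + b *s v)"
proof
  assume "t \<in> vec.span {u, v}"
  then obtain a where "t - a *s u \<in> vec.span {v}" using vec.span_breakdown_eq by blast
  then obtain b where "t - a *s u = b *s v" by (auto simp: vec.span_singleton)
  then show "\<exists>a b. t = a *s u + b *s v" by (metis diff_add_cancel add.commute)
next
  assume "\<exists>a b. t = a *s u + b *s v"
  then show "t \<in> vec.span {u, v}" by (auto simp: vec.span_add vec.span_scale vec.span_base)
qed

lemma independent_lin_indep3:
  assumes ind: "vec.independent {u, v, w}" and card: "card {u, v, w} = 3"
  shows "lin_indep3 u v w"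
  unfolding lin_indep3_def
proof (intro allI impI)
  have distinct: "u \<noteq> v" "u \<noteq> w" "v \<noteq> w" using card by (auto simp: card_insert_if split: if_splits)
  fix a b c assume h: "a *s u + b *s v + c *s w = 0"
  define f where "f t = (if t = u then a else if t = v then b else c)" for t
  have "(\<Sum>t\<in>{u, v, w}. f t *s t) = a *s u + b *s v + c *s w"
    using distinct by (simp add: f_def add.assoc)
  then have "\<forall>t\<in>{u, v, w}. f t = 0" using ind h by (simp add: vec.independent_explicit)
  then show "a = 0 \<and> b = 0 \<and> c = 0" using distinct by (auto simp: f_def)
qed

lemma span_singleton_scale: "c \<noteq> 0 \<Longrightarrow> vec.span {c *s u} = vec.span {u}"
  using vec.span_image_scale[of "{u}" "\<lambda>_. c"] by simp

lemma lin_indep2_of_span_neq: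
  assumes "u \<noteq> 0" "v \<noteq> 0" and neq: "vec.span {u} \<noteq> vec.span {v}"
  shows "lin_indep2 u v"
  unfolding lin_indep2_def
proof (intro allI impI)
  fix a b assume h: "a *s u + b *s v = 0"
  have "b = 0"
  proof (rule ccontr)
    assume "b \<noteq> 0"
    then have v: "v = (- a / b) *s u" using h by (simp add: vec_eq_iff field_simps) (metis add_eq_0_iff2 add.commute)
    then have "- a / b \<noteq> 0" using \<open>v \<noteq> 0\<close> by auto
    then have "vec.span {v} = vec.span {u}" unfolding v by (rule span_singleton_scale)
    then show False using neq by simp
  qed
  then show "a = 0 \<and> b = 0" using h \<open>u \<noteq> 0\<close> by simp
qed

locale cayley =
  fixes \<alpha> \<beta> \<gamma> :: "'a::field"
begin

abbreviation mul (infixl "\<odot>" 70) where "x \<odot> y \<equiv> omult \<alpha> \<beta> \<gamma> x y"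
abbreviation bf where "bf \<equiv> obil \<alpha> \<beta> \<gamma>"
abbreviation nf where "nf x \<equiv> obil \<alpha> \<beta> \<gamma> x x"

section \<open>Identities of the Cayley algebra\<close>

lemma omult_linear:
  "(x + y) \<odot> z = x \<odot> z + y \<odot> z" "z \<odot> (x + y) = z \<odot> x + z \<odot> y"
  "(x - y) \<odot> z = x \<odot> z - y \<odot> z" "z \<odot> (x - y) = z \<odot> x - z \<odot> y"
  "(- x) \<odot> z = - (x \<odot> z)" "z \<odot> (- x) = - (z \<odot> x)"
  "(k *s x) \<odot> z = k *s (x \<odot> z)" "z \<odot> (k *s x) = k *s (z \<odot> x)"
  "0 \<odot> z = 0" "z \<odot> 0 = 0"
  "oone \<odot> z = z" "z \<odot> oone = z"
  unfolding vec8_eq_iff by (simp_all add: component_simps algebra_simps)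

lemma omult_self: "x \<odot> x = otr x *s x - nf x *s oone"
  unfolding vec8_eq_iff by (simp add: component_simps algebra_simps)

lemma oconj_omult: "oconj (x \<odot> y) = oconj y \<odot> oconj x"
  unfolding vec8_eq_iff by (simp add: component_simps algebra_simps)

lemma omult_component_1: "(x \<odot> y) $ 1 = bf x (oconj y)"
  by (simp add: component_simps algebra_simps)

lemma left_alternative: "x \<odot> (x \<odot> y) = (x \<odot> x) \<odot> y"
  unfolding vec8_eq_iff by (intro conjI; simp only: omult_component; simp add: algebra_simps)

lemma obil_omult_left_adjoint: "bf a (b \<odot> c) = bf (oconj b \<odot> a) c"
  by (simp only: obil_def omult_component oconj_component; simp add: algebra_simps)

lemma right_alternative: "(y \<odot> x) \<odot> x = y \<odot> (x \<odot> x)"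
proof -
  have "oconj ((y \<odot> x) \<odot> x) = oconj x \<odot> (oconj x \<odot> oconj y)" by (simp add: oconj_omult)
  also have "\<dots> = (oconj x \<odot> oconj x) \<odot> oconj y" by (rule left_alternative)
  also have "\<dots> = oconj (y \<odot> (x \<odot> x))" by (simp add: oconj_omult)
  finally show ?thesis by (metis oconj_oconj)
qed

lemma onorm_add: "nf (x + z) = nf x + 2 * bf x z + nf z"
  by (simp add: obil_linear obil_sym[of _ _ _ z x] algebra_simps)

lemma onorm_lincomb: "nf (a *s u + b *s v) = a * a * nf u + 2 * a * b * bf u v + b * b * nf v"
  by (simp add: onorm_add obil_linear obil_sym[of _ _ _ v u] algebra_simps)

lemma omult_anticommutator: "x \<odot> z + z \<odot> x = otr x *s z + otr z *s x - (2 * bf x z) *s oone"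
proof -
  have "x \<odot> x + x \<odot> z + z \<odot> x + z \<odot> z = otr (x + z) *s (x + z) - nf (x + z) *s oone"
    using omult_self[of "x + z"] by (simp add: omult_linear algebra_simps)
  then show ?thesis
    unfolding omult_self[of x] omult_self[of z] onorm_add otr_add
    by (simp add: vec_eq_iff algebra_simps)
qed

lemma left_alternative_linear: "x \<odot> (z \<odot> y) + z \<odot> (x \<odot> y) = (x \<odot> z + z \<odot> x) \<odot> y"
  using left_alternative[of "x + z" y] left_alternative[of x y] left_alternative[of z y]
  by (simp add: omult_linear vec_eq_iff algebra_simps)

lemma right_alternative_linear: "(y \<odot> x) \<odot> z + (y \<odot> z) \<odot> x = y \<odot> (x \<odot> z + z \<odot> x)"
  using right_alternative[of y "x + z"] right_alternative[of y x] right_alternative[of y z]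
  by (simp add: omult_linear vec_eq_iff algebra_simps)

lemma flexible: "(x \<odot> y) \<odot> x = x \<odot> (y \<odot> x)"
  using left_alternative_linear[of x y x] right_alternative[of y x]
  by (simp add: omult_linear vec_eq_iff algebra_simps)

lemma oconj_omult_self: "oconj x \<odot> x = nf x *s oone"
  unfolding oconj_eq by (simp add: omult_linear omult_self vec_eq_iff algebra_simps)

lemma omult_oconj_self: "x \<odot> oconj x = nf x *s oone"
  unfolding oconj_eq by (simp add: omult_linear omult_self vec_eq_iff algebra_simps)

lemma obil_oconj_left: "bf (oconj u) v = bf u (oconj v)"
  using obil_oconj[of \<alpha> \<beta> \<gamma> u "oconj v"] by simp

lemma obil_omult_right_adjoint: "bf a (b \<odot> c) = bf (a \<odot> oconj c) b"
proof -
  have "bf a (b \<odot> c) = bf (oconj a) (oconj c \<odot> oconj b)"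
    by (metis oconj_omult obil_oconj)
  also have "\<dots> = bf (c \<odot> oconj a) (oconj b)"
    by (simp add: obil_omult_left_adjoint)
  also have "\<dots> = bf (a \<odot> oconj c) b"
    by (metis obil_oconj_left oconj_oconj oconj_omult)
  finally show ?thesis .
qed

lemma onorm_omult: "nf (x \<odot> y) = nf x * nf y"
proof -
  have "nf (x \<odot> y) = bf (oconj x \<odot> (x \<odot> y)) y" by (rule obil_omult_left_adjoint)
  also have "oconj x \<odot> (x \<odot> y) = nf x *s y"
    unfolding oconj_eq by (simp add: omult_linear left_alternative omult_self vec_eq_iff algebra_simps)
  finally show ?thesis by (simp add: obil_linear)
qed

lemma isotropic_sandwich:
  assumes "nf q = 0"
  shows "q \<odot> (w \<odot> q) = (otr w * otr q - 2 * bf w q) *s q"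
proof -
  have wq: "w \<odot> q = otr w *s q + otr q *s w - (2 * bf w q) *s oone - q \<odot> w"
    using omult_anticommutator[of w q] by (simp add: vec_eq_iff algebra_simps)
  have qq: "q \<odot> q = otr q *s q" using omult_self[of q] assms by simp
  have "q \<odot> (q \<odot> w) = otr q *s (q \<odot> w)" by (simp add: left_alternative qq omult_linear)
  then show ?thesis unfolding wq using qq
    by (simp add: omult_linear vec_eq_iff algebra_simps)
qed

lemma omult_self_imaginary: "x $ 1 = 0 \<Longrightarrow> x \<odot> x = - nf x *s oone"
  using omult_self[of x] by (simp add: otr_def)

lemma omult_swap_imaginary:
  assumes "x $ 1 = 0" "y $ 1 = 0"
  shows "y \<odot> x = - (x \<odot> y) - (2 * bf x y) *s oone"
proof -
  have "y \<odot> x = (x \<odot> y + y \<odot> x) - x \<odot> y" by simp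
  also have "x \<odot> y + y \<odot> x = - (2 * bf x y) *s oone"
    using omult_anticommutator[of x y] assms by (simp add: otr_def)
  finally show ?thesis by simp
qed

lemma obil_oone_omult_imaginary: "y $ 1 = 0 \<Longrightarrow> bf oone (x \<odot> y) = - bf x y"
  by (simp add: obil_oone omult_component_1 oconj_imaginary obil_linear)

lemma obil_omult_left_factor: "y $ 1 = 0 \<Longrightarrow> bf x (x \<odot> y) = 0"
  by (simp add: obil_omult_left_adjoint oconj_omult_self obil_linear obil_oone)

lemma obil_omult_right_factor: "x $ 1 = 0 \<Longrightarrow> bf y (x \<odot> y) = 0"
  by (simp add: obil_omult_right_adjoint omult_oconj_self obil_linear obil_oone)

lemma obil_nondegenerate:
  assumes "\<alpha> \<noteq> 0" "\<beta> \<noteq> 0" "\<gamma> \<noteq> 0" and "x \<noteq> 0"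
  obtains c where "bf x c \<noteq> 0"
proof -
  from \<open>x \<noteq> 0\<close> obtain i where i: "x $ i \<noteq> 0" by (metis vec_eq_iff zero_index)
  have "bf x (axis i 1) \<noteq> 0"
    using num8_cases[of i] i assms by (auto simp: obil_def axis_def)
  then show ?thesis using that by blast
qed

section \<open>Peirce decomposition\<close>

lemma idempotent_trace_one:
  assumes idem: "p \<odot> p = p" and trace: "otr p = 1"
  shows "nf p = 0" and "oconj p = oone - p"
proof -
  have "nf p *s oone = 0" using omult_self[of p] idem trace by simp
  then show "nf p = 0" using oone_neq_zero[where 'a='a] by simp
  show "oconj p = oone - p" using trace by (simp add: oconj_eq)
qed

lemma complement_idempotent:
  assumes "p \<odot> p = p" and "otr p = 1"
  shows "(oone - p) \<odot> (oone - p) = oone - p" and "otr (oone - p) = 1"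
  using assms by (simp_all add: omult_linear otr_def oone_component algebra_simps)

lemma peirce_projection:
  assumes idem: "p \<odot> p = p"
  shows "p \<odot> ((p \<odot> c) \<odot> (oone - p)) = (p \<odot> c) \<odot> (oone - p)"
    and "((p \<odot> c) \<odot> (oone - p)) \<odot> p = 0"
proof -
  have "p \<odot> ((p \<odot> c) \<odot> p) = (p \<odot> (p \<odot> c)) \<odot> p" using flexible[of p "p \<odot> c"] by simp
  moreover have "p \<odot> (p \<odot> c) = p \<odot> c" using left_alternative[of p c] idem by simp
  ultimately show "p \<odot> ((p \<odot> c) \<odot> (oone - p)) = (p \<odot> c) \<odot> (oone - p)"
    by (simp add: omult_linear)
  show "((p \<odot> c) \<odot> (oone - p)) \<odot> p = 0"
    by (simp add: omult_linear right_alternative idem)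
qed

text \<open>The product of y with a vector d of the opposite Peirce space {v. p v = v, v p = 0} is a
  multiple of 1 - p, which pins y down as a multiple of x.\<close>
lemma peirce_collinear:
  assumes params: "\<alpha> \<noteq> 0" "\<beta> \<noteq> 0" "\<gamma> \<noteq> 0"
    and idem: "p \<odot> p = p" and trace: "otr p = 1"
    and px: "p \<odot> x = 0" and xp: "x \<odot> p = x" and x1: "x $ 1 = 0" and "x \<noteq> 0"
    and py: "p \<odot> y = 0" and yp: "y \<odot> p = y" and yx: "y \<odot> x = 0"
  obtains t where "y = t *s x"
proof -
  have two: "(2::'a) \<noteq> 0" using trace by (auto simp: otr_def)
  define q where "q = oone - p"
  have q_idem: "q \<odot> q = q" and q_trace: "otr q = 1"
    using complement_idempotent[OF idem trace] by (simp_all add: q_def)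
  have nq: "nf q = 0" and conj_q: "oconj q = p"
    using idempotent_trace_one[OF q_idem q_trace] by (simp_all add: q_def)
  have conj_p: "oconj p = q" using idempotent_trace_one[OF idem trace] by (simp add: q_def)
  have qx: "q \<odot> x = x" by (simp add: q_def omult_linear px)
  obtain c where c: "bf x c \<noteq> 0" using obil_nondegenerate[OF params \<open>x \<noteq> 0\<close>] .
  define d where "d = (p \<odot> c) \<odot> q"
  have pd: "p \<odot> d = d" and dp: "d \<odot> p = 0" using peirce_projection[OF idem] by (simp_all add: d_def q_def)
  define w where "w = y \<odot> d"
  have "w \<odot> p = 0" using right_alternative_linear[of y d p] by (simp add: w_def dp pd yp omult_linear)
  moreover have "p \<odot> w = 0" using left_alternative_linear[of p y d] by (simp add: w_def pd py yp omult_linear)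
  ultimately have "q \<odot> (w \<odot> q) = w" by (simp add: q_def omult_linear)
  define s where "s = otr w - 2 * bf w q"
  have "w = s *s q" using isotropic_sandwich[OF nq, of w] q_trace \<open>q \<odot> (w \<odot> q) = w\<close>
    by (simp add: s_def)
  then have wx: "w \<odot> x = s *s x" by (simp add: omult_linear qx)
  have "w \<odot> x = - (2 * bf d x) *s y"
  proof -
    have "(y \<odot> d) \<odot> x + (y \<odot> x) \<odot> d = y \<odot> (d \<odot> x + x \<odot> d)" by (rule right_alternative_linear)
    also have "\<dots> = y \<odot> (otr d *s x - (2 * bf d x) *s oone)"
      using omult_anticommutator[of d x] x1 by (simp add: otr_def)
    finally show ?thesis using yx by (simp add: w_def omult_linear)
  qed
  moreover have "bf d x = bf x c"
  proof -
    have "bf d x = bf x ((p \<odot> c) \<odot> q)" by (simp add: d_def obil_sym)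
    also have "\<dots> = bf (x \<odot> oconj q) (p \<odot> c)" by (rule obil_omult_right_adjoint)
    also have "\<dots> = bf (oconj p \<odot> x) c" unfolding conj_q xp by (rule obil_omult_left_adjoint)
    finally show ?thesis by (simp add: conj_p qx)
  qed
  ultimately have "s *s x = - (2 * bf x c) *s y" using wx by simp
  then have "y = (- s / (2 * bf x c)) *s x"
    using c two by (simp add: vec_eq_iff field_simps)
  then show ?thesis using that by blast
qed

section \<open>Basis pairs\<close>

definition basis_pair :: "'a^8 \<Rightarrow> 'a^8 \<Rightarrow> bool" where
  "basis_pair x y \<longleftrightarrow> lin_indep4 oone x y (x \<odot> y)"

lemma orthogonal_lin_indep4:
  assumes "bf u v = 0" "bf u w = 0" "bf u z = 0" "bf v w = 0" "bf v z = 0" "bf w z = 0"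
    and "nf u \<noteq> 0" "nf v \<noteq> 0" "nf w \<noteq> 0" "nf z \<noteq> 0"
  shows "lin_indep4 u v w z"
  unfolding lin_indep4_def
proof (intro allI impI)
  fix a b c d assume "a *s u + b *s v + c *s w + d *s z = 0"
  then have "a * bf t u + b * bf t v + c * bf t w + d * bf t z = 0" for t
    using obil_linear(2,6,10)[of \<alpha> \<beta> \<gamma> t] by metis
  from this[of u] this[of v] this[of w] this[of z]
  show "a = 0 \<and> b = 0 \<and> c = 0 \<and> d = 0" using assms by (simp add: obil_sym)
qed

lemma orthogonal_anisotropic_basis_pair:
  assumes x1: "x $ 1 = 0" and y1: "y $ 1 = 0" and "nf x \<noteq> 0" "nf y \<noteq> 0" and bxy: "bf x y = 0"
  shows "basis_pair x y"
  unfolding basis_pair_def using assms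
  by (intro orthogonal_lin_indep4)
    (simp_all add: obil_oone obil_oone_omult_imaginary obil_omult_left_factor
      obil_omult_right_factor onorm_omult oone_component omult_component_1 oconj_imaginary obil_linear)

lemma lin_indep3_oone_imaginary:
  assumes "x $ 1 = 0" "y $ 1 = 0" "lin_indep2 x y"
  shows "lin_indep3 oone x y"
  unfolding lin_indep3_def
proof (intro allI impI)
  fix a b c assume h: "a *s oone + b *s x + c *s y = 0"
  have "a = 0" using arg_cong[OF h, of "\<lambda>v. v $ 1"] assms by (simp add: oone_component)
  with h assms(3) show "a = 0 \<and> b = 0 \<and> c = 0" by (simp add: lin_indep2_def)
qed

lemma non_basis_pair_omult:
  assumes ind: "lin_indep3 oone x y" and "\<not> basis_pair x y"
  obtains a b c where "x \<odot> y = a *s oone + b *s x + c *s y"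
proof -
  obtain a b c d where h: "a *s oone + b *s x + c *s y + d *s (x \<odot> y) = 0"
    and nontrivial: "\<not> (a = 0 \<and> b = 0 \<and> c = 0 \<and> d = 0)"
    using assms(2) unfolding basis_pair_def lin_indep4_def by blast
  have "d \<noteq> 0" using h nontrivial ind by (auto simp: lin_indep3_def)
  then have "x \<odot> y = (- a / d) *s oone + (- b / d) *s x + (- c / d) *s y"
    using h by (simp add: vec_eq_iff field_simps) (metis add_eq_0_iff2 add.commute)
  then show ?thesis using that by blast
qed

lemma isotropic_non_basis_pair_omult_zero:
  assumes y1: "y $ 1 = 0" and z1: "z $ 1 = 0" and ny: "nf y = 0" and nz: "nf z = 0"
    and ind: "lin_indep2 y z" and "\<not> basis_pair y z"
  shows "y \<odot> z = 0"
proof -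
  have ind3: "lin_indep3 oone y z" using lin_indep3_oone_imaginary[OF y1 z1 ind] .
  obtain a b c where yz: "y \<odot> z = a *s oone + b *s y + c *s z"
    using non_basis_pair_omult[OF ind3 \<open>\<not> basis_pair y z\<close>] .
  have yy: "y \<odot> y = 0" and zz: "z \<odot> z = 0"
    using omult_self_imaginary[OF y1] omult_self_imaginary[OF z1] ny nz by simp_all
  have "(c * a) *s oone + (a + c * b) *s y + (c * c) *s z = a *s y + c *s (y \<odot> z)"
    unfolding yz by (simp add: vec_eq_iff algebra_simps)
  also have "\<dots> = y \<odot> (y \<odot> z)" by (simp add: yz omult_linear yy)
  also have "\<dots> = 0" by (simp add: left_alternative yy omult_linear)
  finally have "c * a = 0 \<and> a + c * b = 0 \<and> c * c = 0" using ind3 unfolding lin_indep3_def by blast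
  then have "a = 0" "c = 0" by auto
  then have yz': "y \<odot> z = b *s y" using yz by simp
  have "(b * b) *s y = (y \<odot> z) \<odot> z" by (simp add: yz' omult_linear)
  also have "\<dots> = 0" by (simp add: right_alternative zz omult_linear)
  finally have "b = 0" using lin_indep2_nonzero(1)[OF ind] by simp
  then show ?thesis using yz' by simp
qed

lemma anisotropic_non_basis_pair_eigen:
  assumes x1: "x $ 1 = 0" and nx: "nf x \<noteq> 0" and y1: "y $ 1 = 0" and ny: "nf y = 0"
    and bxy: "bf x y = 0" and "y \<noteq> 0" and "\<not> basis_pair x y"
  obtains c where "x \<odot> y = c *s y" and "c * c = - nf x"
proof -
  have "lin_indep3 oone x y"
    unfolding lin_indep3_def
  proof (intro allI impI)
    fix a b c assume h: "a *s oone + b *s x + c *s y = 0"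
    have "a = 0" using arg_cong[OF h, of "\<lambda>v. v $ 1"] x1 y1 by (simp add: oone_component)
    moreover have "b = 0"
      using arg_cong[OF h, of "bf x"] x1 bxy nx by (simp add: obil_linear obil_oone)
    ultimately show "a = 0 \<and> b = 0 \<and> c = 0" using h \<open>y \<noteq> 0\<close> by simp
  qed
  then obtain a b c where xy: "x \<odot> y = a *s oone + b *s x + c *s y"
    using non_basis_pair_omult \<open>\<not> basis_pair x y\<close> by blast
  have "a = 0"
    using arg_cong[OF xy, of "bf oone"] obil_oone_omult_imaginary[OF y1, of x] x1 y1 bxy
    by (simp add: obil_linear obil_oone oone_component)
  moreover have "b = 0"
    using arg_cong[OF xy, of "bf x"] obil_omult_left_factor[OF y1, of x] x1 bxy nx
    by (simp add: obil_linear obil_oone)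
  ultimately have xy': "x \<odot> y = c *s y" using xy by simp
  have "(c * c) *s y = x \<odot> (x \<odot> y)" by (simp add: xy' omult_linear)
  also have "\<dots> = (- nf x) *s y" by (simp add: left_alternative omult_self_imaginary[OF x1] omult_linear)
  finally have "(c * c + nf x) *s y = 0" by (simp add: vec_eq_iff algebra_simps)
  then have "c * c = - nf x" using \<open>y \<noteq> 0\<close> vector_mul_eq_0 eq_neg_iff_add_eq_0 by blast
  with xy' show ?thesis using that by blast
qed

lemma eigen_idempotent:
  assumes two: "(2::'a) \<noteq> 0" and x1: "x $ 1 = 0" and "c \<noteq> 0"
    and xx: "x \<odot> x = (c * c) *s oone"
  defines "p \<equiv> (1/2) *s oone - (1/(2*c)) *s x"
  shows "p \<odot> p = p" and "otr p = 1"
    and "x \<odot> y = c *s y \<Longrightarrow> y \<odot> x = - c *s y \<Longrightarrow> p \<odot> y = 0 \<and> y \<odot> p = y"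
proof -
  have four: "(4::'a) \<noteq> 0" using mult_eq_0_iff[of "2::'a" 2] two by simp
  then have "(16::'a) \<noteq> 0" using mult_eq_0_iff[of "4::'a" 4] by simp
  with four show "p \<odot> p = p" and "otr p = 1"
    and "x \<odot> y = c *s y \<Longrightarrow> y \<odot> x = - c *s y \<Longrightarrow> p \<odot> y = 0 \<and> y \<odot> p = y"
    using assms by (simp_all add: omult_linear xx otr_def oone_component vec_eq_iff field_simps)
qed

text \<open>If none of these pairs is a basis pair, x acts on the isotropic plane span {y, z} as a
  scalar c with c c = -n(x), and y, z lie in the Peirce space of the idempotent (1 - x/c)/2.\<close>
lemma basis_pair_in_anisotropic_isotropic_plane:
  assumes params: "\<alpha> \<noteq> 0" "\<beta> \<noteq> 0" "\<gamma> \<noteq> 0" and two: "(2::'a) \<noteq> 0"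
    and x1: "x $ 1 = 0" and nx: "nf x \<noteq> 0" and y1: "y $ 1 = 0" and z1: "z $ 1 = 0"
    and bxy: "bf x y = 0" and bxz: "bf x z = 0" and ny: "nf y = 0" and nz: "nf z = 0"
    and byz: "bf y z = 0" and ind: "lin_indep2 y z"
  shows "basis_pair z y \<or> basis_pair x y \<or> basis_pair x z \<or> basis_pair x (y + z)"
proof (rule ccontr)
  assume "\<not> ?thesis"
  then have no_basis: "\<not> basis_pair z y" "\<not> basis_pair x y" "\<not> basis_pair x z" "\<not> basis_pair x (y + z)"
    by auto
  have zy: "z \<odot> y = 0"
    using isotropic_non_basis_pair_omult_zero[OF z1 y1 nz ny lin_indep2_sym[OF ind] no_basis(1)] .
  note nonzero = lin_indep2_nonzero[OF ind]
  obtain c1 where c1: "x \<odot> y = c1 *s y" "c1 * c1 = - nf x"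
    using anisotropic_non_basis_pair_eigen[OF x1 nx y1 ny bxy nonzero(1) no_basis(2)] .
  obtain c2 where c2: "x \<odot> z = c2 *s z"
    using anisotropic_non_basis_pair_eigen[OF x1 nx z1 nz bxz nonzero(2) no_basis(3)] .
  have "(y + z) $ 1 = 0" "nf (y + z) = 0" "bf x (y + z) = 0"
    using y1 z1 ny nz byz bxy bxz by (simp_all add: onorm_add obil_linear obil_sym)
  then obtain c3 where c3: "x \<odot> (y + z) = c3 *s (y + z)"
    using anisotropic_non_basis_pair_eigen[OF x1 nx _ _ _ nonzero(3) no_basis(4)] by blast
  have "(c1 - c3) *s y + (c2 - c3) *s z = x \<odot> y + x \<odot> z - x \<odot> (y + z)"
    unfolding c1 c2 c3 by (simp add: vec_eq_iff algebra_simps)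
  also have "\<dots> = 0" by (simp add: omult_linear)
  finally have "c1 = c3" "c2 = c3" using ind unfolding lin_indep2_def by (metis right_minus_eq)+
  then have xz: "x \<odot> z = c1 *s z" using c2 by simp
  have "c1 \<noteq> 0" using c1(2) nx by auto
  have yx: "y \<odot> x = - c1 *s y" and zx: "z \<odot> x = - c1 *s z"
    using omult_swap_imaginary[OF x1 y1] omult_swap_imaginary[OF x1 z1] c1(1) xz bxy bxz by simp_all
  have xx: "x \<odot> x = (c1 * c1) *s oone" using omult_self_imaginary[OF x1] c1(2) by simp
  note p = eigen_idempotent[OF two x1 \<open>c1 \<noteq> 0\<close> xx]
  obtain t where "z = t *s y"
    using peirce_collinear[OF params p(1,2)] p(3)[OF c1(1) yx] p(3)[OF xz zx] y1 nonzero(1) zy by metis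
  then show False using ind[unfolded lin_indep2_def, rule_format, of t "-1"] by simp
qed

lemma isotropic_partner:
  assumes params: "\<alpha> \<noteq> 0" "\<beta> \<noteq> 0" "\<gamma> \<noteq> 0" and two: "(2::'a) \<noteq> 0"
    and x1: "x $ 1 = 0" and "x \<noteq> 0" and nx: "nf x = 0"
  obtains d where "d $ 1 = 0" and "nf d = 0" and "bf x d = - 1/2"
proof -
  obtain e where e: "bf x e \<noteq> 0" using obil_nondegenerate[OF params \<open>x \<noteq> 0\<close>] .
  define c where "c = (- 1 / (2 * bf x e)) *s (e - e $ 1 *s oone)"
  have c1: "c $ 1 = 0" by (simp add: c_def oone_component)
  have bxc: "bf x c = - 1/2" using e two x1 by (simp add: c_def obil_linear obil_oone)
  define d where "d = c + nf c *s x"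
  have "d $ 1 = 0" using c1 x1 by (simp add: d_def)
  moreover have "bf x d = - 1/2" using bxc nx by (simp add: d_def obil_linear)
  moreover have "nf d = nf c * (1 + 2 * bf x c)"
    using nx by (simp add: d_def onorm_add obil_linear obil_sym[of _ _ _ c x] algebra_simps)
  then have "nf d = 0" using bxc two by simp
  ultimately show ?thesis using that by blast
qed

lemma hyperbolic_idempotent:
  assumes two: "(2::'a) \<noteq> 0" and x1: "x $ 1 = 0" and d1: "d $ 1 = 0"
    and xx: "x \<odot> x = 0" and nd: "nf d = 0" and bxd: "bf x d = - 1/2"
  shows "(d \<odot> x) \<odot> (d \<odot> x) = d \<odot> x" and "otr (d \<odot> x) = 1"
    and "(d \<odot> x) \<odot> x = 0" and "x \<odot> (d \<odot> x) = x" and "x \<odot> d + d \<odot> x = oone"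
proof -
  have trace: "otr (d \<odot> x) = 1"
    using bxd two by (simp add: otr_def omult_component_1 oconj_imaginary[OF x1] obil_linear obil_sym)
  have "nf x = 0" using omult_self_imaginary[OF x1] xx oone_neq_zero[where 'a='a] by simp
  then have "nf (d \<odot> x) = 0" by (simp add: onorm_omult)
  then show "(d \<odot> x) \<odot> (d \<odot> x) = d \<odot> x" using omult_self[of "d \<odot> x"] trace by simp
  show "otr (d \<odot> x) = 1" by (fact trace)
  show "(d \<odot> x) \<odot> x = 0" by (simp add: right_alternative xx omult_linear)
  show xd: "x \<odot> d + d \<odot> x = oone"
    using omult_anticommutator[of x d] x1 d1 bxd two by (simp add: otr_def)
  show "x \<odot> (d \<odot> x) = x"
    using left_alternative_linear[of x d x] unfolding xd by (simp add: xx omult_linear)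
qed

lemma hyperbolic_shift:
  assumes two: "(2::'a) \<noteq> 0" and x1: "x $ 1 = 0" and d1: "d $ 1 = 0"
    and xx: "x \<odot> x = 0" and nd: "nf d = 0" and bxd: "bf x d = - 1/2"
    and v1: "v $ 1 = 0" and vx: "v \<odot> x = 0" and xv: "x \<odot> v = 0"
  defines "v' \<equiv> v + (2 * bf v d) *s x"
  shows "(d \<odot> x) \<odot> v' = v'" and "v' \<odot> (d \<odot> x) = 0"
proof -
  note p = hyperbolic_idempotent[OF two x1 d1 xx nd bxd]
  have dv: "d \<odot> v = - (v \<odot> d) - (2 * bf v d) *s oone" by (rule omult_swap_imaginary[OF v1 d1])
  have "d \<odot> x + x \<odot> d = oone" using p(5) by (simp add: add.commute)
  then have "(v \<odot> d) \<odot> x = v"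
    using right_alternative_linear[of v d x] by (simp add: vx omult_linear)
  moreover have "(d \<odot> x) \<odot> v + (d \<odot> v) \<odot> x = 0"
    using right_alternative_linear[of d x v] by (simp add: xv vx omult_linear)
  ultimately have "(d \<odot> x) \<odot> v = v + (2 * bf v d) *s x"
    unfolding dv by (simp add: omult_linear eq_neg_iff_add_eq_0 algebra_simps)
  then show "(d \<odot> x) \<odot> v' = v'" by (simp add: v'_def omult_linear p(3,4))
  have "v \<odot> (d \<odot> x) + d \<odot> (v \<odot> x) = (v \<odot> d + d \<odot> v) \<odot> x" by (rule left_alternative_linear)
  then have "v \<odot> (d \<odot> x) = - (2 * bf v d) *s x" unfolding dv by (simp add: vx omult_linear)
  then show "v' \<odot> (d \<odot> x) = 0" by (simp add: v'_def omult_linear p(4))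
qed

text \<open>For the idempotent p = d x of a hyperbolic pair, shifting y and z by multiples of x
  moves them into the Peirce space of 1 - p, where z y = 0 makes them proportional.\<close>
lemma null_products_dependent:
  assumes params: "\<alpha> \<noteq> 0" "\<beta> \<noteq> 0" "\<gamma> \<noteq> 0" and two: "(2::'a) \<noteq> 0"
    and x1: "x $ 1 = 0" and y1: "y $ 1 = 0" and z1: "z $ 1 = 0"
    and xx: "x \<odot> x = 0" and xy: "x \<odot> y = 0" and yx: "y \<odot> x = 0" and xz: "x \<odot> z = 0"
    and zx: "z \<odot> x = 0" and zy: "z \<odot> y = 0"
  shows "\<not> lin_indep3 x y z"
proof
  assume ind: "lin_indep3 x y z"
  have "x \<noteq> 0" using lin_indep2_nonzero(1)[OF lin_indep3_imp_lin_indep2(1)[OF ind]] .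
  moreover have "nf x = 0" using omult_self_imaginary[OF x1] xx oone_neq_zero[where 'a='a] by simp
  ultimately obtain d where d: "d $ 1 = 0" "nf d = 0" "bf x d = - 1/2"
    using isotropic_partner[OF params two x1] by blast
  define p where "p = d \<odot> x"
  note p = hyperbolic_idempotent[OF two x1 d(1) xx d(2,3), folded p_def]
  note q = complement_idempotent[OF p(1,2)]
  define y' where "y' = y + (2 * bf y d) *s x"
  define z' where "z' = z + (2 * bf z d) *s x"
  have "p \<odot> y' = y'" "y' \<odot> p = 0" "p \<odot> z' = z'" "z' \<odot> p = 0"
    using hyperbolic_shift[OF two x1 d(1) xx d(2,3)] y1 yx xy z1 zx xz
    by (auto simp: p_def y'_def z'_def)
  then have qy: "(oone - p) \<odot> y' = 0" "y' \<odot> (oone - p) = y'"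
    and qz: "(oone - p) \<odot> z' = 0" "z' \<odot> (oone - p) = z'" by (simp_all add: omult_linear)
  have "z' \<odot> y' = 0" by (simp add: y'_def z'_def omult_linear zy zx xy xx)
  moreover have "y' $ 1 = 0" using y1 x1 by (simp add: y'_def)
  moreover have "y' \<noteq> 0"
    using ind[unfolded lin_indep3_def, rule_format, of "2 * bf y d" 1 0] by (auto simp: y'_def add.commute)
  ultimately obtain t where "z' = t *s y'"
    using peirce_collinear[OF params q qy] qz by metis
  then have "(2 * bf z d - t * (2 * bf y d)) *s x + (- t) *s y + 1 *s z = 0"
    by (simp add: y'_def z'_def vec_eq_iff algebra_simps)
  then show False using ind[unfolded lin_indep3_def, rule_format] by fastforce
qed

lemma oim_subspace:
  assumes two: "(2::'a) \<noteq> 0" and sub: "is_subalgebra \<alpha> \<beta> \<gamma> H"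
  shows "vec.subspace (oim H)"
proof -
  have subH: "vec.subspace H" using sub by (simp add: is_subalgebra_def)
  show ?thesis
    unfolding vec.subspace_def oim_iff[OF two]
    using vec.subspace_0[OF subH] vec.subspace_add[OF subH] vec.subspace_scale[OF subH]
    by (auto simp: oim_iff[OF two])
qed

lemma dim_oim:
  assumes two: "(2::'a) \<noteq> 0" and sub: "is_subalgebra \<alpha> \<beta> \<gamma> H" and dimH: "vec.dim H = 4"
  shows "vec.dim (oim H) = 3"
proof -
  have subH: "vec.subspace H" and oneH: "oone \<in> H" using sub by (auto simp: is_subalgebra_def)
  have "H = vec.span (insert oone (oim H))"
  proof
    show "H \<subseteq> vec.span (insert oone (oim H))"
    proof
      fix h assume "h \<in> H"
      then have "h - h $ 1 *s oone \<in> oim H"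
        using vec.subspace_diff[OF subH _ vec.subspace_scale[OF subH oneH]]
        by (simp add: oim_iff[OF two] oone_component)
      then have "h $ 1 *s oone + (h - h $ 1 *s oone) \<in> vec.span (insert oone (oim H))"
        by (intro vec.span_add vec.span_scale) (auto intro: vec.span_base)
      then show "h \<in> vec.span (insert oone (oim H))" by simp
    qed
    show "vec.span (insert oone (oim H)) \<subseteq> H"
      using oneH subH by (intro vec.span_minimal) (auto simp: oim_def)
  qed
  then have "vec.dim H = vec.dim (insert oone (oim H))" by (metis vec.dim_span)
  moreover have "oone \<notin> vec.span (oim H)"
  proof -
    have "vec.span (oim H) = oim H"
      by (rule vec.span_eq_iff[THEN iffD2, OF oim_subspace[OF two sub]])
    moreover have "oone \<notin> oim H" by (simp add: oim_iff[OF two] oone_component)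
    ultimately show ?thesis by blast
  qed
  ultimately show ?thesis using dimH by (simp add: vec.dim_insert)
qed

lemma oim_extend_lin_indep3:
  assumes two: "(2::'a) \<noteq> 0" and sub: "is_subalgebra \<alpha> \<beta> \<gamma> H" and dimH: "vec.dim H = 4"
    and x: "x \<in> oim H" "x \<noteq> 0"
  obtains y z where "y \<in> oim H" and "z \<in> oim H" and "lin_indep3 x y z"
proof -
  obtain B where xB: "{x} \<subseteq> B" and B: "B \<subseteq> oim H" "vec.independent B" "oim H \<subseteq> vec.span B"
    using vec.maximal_independent_subset_extend[of "{x}" "oim H"] x by auto
  have "card B = 3" using vec.basis_card_eq_dim[OF B(1,3,2)] dim_oim[OF two sub dimH] by simp
  then have "card (B - {x}) = 2" using xB by (simp add: card_Diff_subset card.infinite)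
  then obtain y z where yz: "B - {x} = {y, z}" by (auto simp: card_2_iff)
  then have "B = {x, y, z}" using xB by auto
  then have "lin_indep3 x y z" using B(2) \<open>card B = 3\<close> by (simp add: independent_lin_indep3)
  then show ?thesis using that yz B(1) by blast
qed

lemma exists_basis_pair_anisotropic:
  assumes params: "\<alpha> \<noteq> 0" "\<beta> \<noteq> 0" "\<gamma> \<noteq> 0" and two: "(2::'a) \<noteq> 0"
    and sub: "is_subalgebra \<alpha> \<beta> \<gamma> H" and dimH: "vec.dim H = 4"
    and x: "x \<in> oim H" and nx: "nf x \<noteq> 0"
  shows "\<exists>u\<in>oim H. \<exists>v\<in>oim H. basis_pair u v"
proof (rule ccontr)
  assume none: "\<not> ?thesis"
  note V = oim_subspace[OF two sub] and imag = oim_iff[OF two]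
  have isotropic: "nf u = 0" if "u \<in> oim H" "bf x u = 0" for u
    using none orthogonal_anisotropic_basis_pair[of x u] that x nx imag by blast
  have "x \<noteq> 0" using nx by (auto simp: obil_linear)
  then obtain y0 z0 where y0: "y0 \<in> oim H" and z0: "z0 \<in> oim H" and ind: "lin_indep3 x y0 z0"
    using oim_extend_lin_indep3[OF two sub dimH x] by blast
  define y where "y = y0 - (bf x y0 / nf x) *s x"
  define z where "z = z0 - (bf x z0 / nf x) *s x"
  have y: "y \<in> oim H" and z: "z \<in> oim H"
    unfolding y_def z_def using V x y0 z0 by (auto intro: vec.subspace_diff vec.subspace_scale)
  have bxy: "bf x y = 0" and bxz: "bf x z = 0" using nx by (simp_all add: y_def z_def obil_linear)
  have ny: "nf y = 0" and nz: "nf z = 0" using isotropic y z bxy bxz by auto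
  have "bf x (y + z) = 0" using bxy bxz by (simp add: obil_linear)
  then have "nf (y + z) = 0" by (rule isotropic[OF vec.subspace_add[OF V y z]])
  then have byz: "bf y z = 0" using ny nz two by (simp add: onorm_add)
  have "lin_indep2 y z"
    unfolding lin_indep2_def
  proof (intro allI impI)
    fix a b assume "a *s y + b *s z = 0"
    then have "(- (a * (bf x y0 / nf x) + b * (bf x z0 / nf x))) *s x + a *s y0 + b *s z0 = 0"
      by (simp add: y_def z_def vec_eq_iff algebra_simps)
    then show "a = 0 \<and> b = 0" using ind unfolding lin_indep3_def by blast
  qed
  then have "basis_pair z y \<or> basis_pair x y \<or> basis_pair x z \<or> basis_pair x (y + z)"
    using basis_pair_in_anisotropic_isotropic_plane[OF params two _ nx _ _ bxy bxz ny nz byz] x y z imag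
    by blast
  then show False using none x y z vec.subspace_add[OF V y z] by blast
qed

lemma exists_basis_pair_isotropic:
  assumes params: "\<alpha> \<noteq> 0" "\<beta> \<noteq> 0" "\<gamma> \<noteq> 0" and two: "(2::'a) \<noteq> 0"
    and sub: "is_subalgebra \<alpha> \<beta> \<gamma> H" and dimH: "vec.dim H = 4"
    and isotropic: "\<forall>u\<in>oim H. nf u = 0"
  shows "\<exists>u\<in>oim H. \<exists>v\<in>oim H. basis_pair u v"
proof (rule ccontr)
  assume none: "\<not> ?thesis"
  note imag = oim_iff[OF two]
  have null: "u \<odot> v = 0" if "u \<in> oim H" "v \<in> oim H" "lin_indep2 u v" for u v
    using isotropic_non_basis_pair_omult_zero[OF _ _ _ _ that(3)] that none isotropic imag by blast
  have "\<not> oim H \<subseteq> vec.span {}"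
    using vec.dim_le_card[of "oim H" "{}"] dim_oim[OF two sub dimH] by auto
  then obtain x where x: "x \<in> oim H" "x \<noteq> 0" by auto
  then obtain y z where y: "y \<in> oim H" and z: "z \<in> oim H" and ind: "lin_indep3 x y z"
    using oim_extend_lin_indep3[OF two sub dimH] by blast
  note ind2 = lin_indep3_imp_lin_indep2[OF ind]
  have "x \<odot> x = 0" using omult_self_imaginary[of x] isotropic x imag by simp
  moreover have "x \<odot> y = 0" "y \<odot> x = 0" "x \<odot> z = 0" "z \<odot> x = 0" "z \<odot> y = 0"
    using null x y z ind2 lin_indep2_sym by blast+
  ultimately have "\<not> lin_indep3 x y z"
    using null_products_dependent[OF params two] x y z imag by blast
  then show False using ind by contradiction
qed

lemma exists_basis_pair:
  assumes params: "\<alpha> \<noteq> 0" "\<beta> \<noteq> 0" "\<gamma> \<noteq> 0" and two: "(2::'a) \<noteq> 0"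
    and sub: "is_subalgebra \<alpha> \<beta> \<gamma> H" and dimH: "vec.dim H = 4"
  obtains x y where "x \<in> oim H" and "y \<in> oim H" and "basis_pair x y"
  using exists_basis_pair_anisotropic[OF params two sub dimH]
    exists_basis_pair_isotropic[OF params two sub dimH] by blast

section \<open>Nilpotent lines and types\<close>

lemma opow_imaginary:
  assumes x1: "x $ 1 = 0"
  shows "opow \<alpha> \<beta> \<gamma> x n =
    (if even n then (- nf x) ^ (n div 2) *s oone else (- nf x) ^ (n div 2) *s x)"
proof (induction n)
  case (Suc n)
  show ?case
  proof (cases "even n")
    case False
    then have "opow \<alpha> \<beta> \<gamma> x (Suc n) = (- nf x) ^ (n div 2) *s (x \<odot> x)"
      using Suc by (simp add: omult_linear)
    also have "\<dots> = (- nf x) ^ (Suc n div 2) *s oone"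
      using False by (simp add: omult_self_imaginary[OF x1] odd_Suc_div_two mult.commute)
    finally show ?thesis using False by simp
  qed (use Suc in \<open>simp add: omult_linear\<close>)
qed simp

lemma onilpotent_imaginary_iff:
  assumes x1: "x $ 1 = 0"
  shows "onilpotent \<alpha> \<beta> \<gamma> x \<longleftrightarrow> nf x = 0"
proof
  assume "onilpotent \<alpha> \<beta> \<gamma> x"
  then obtain n where n: "opow \<alpha> \<beta> \<gamma> x n = 0" by (auto simp: onilpotent_def)
  show "nf x = 0"
  proof (rule ccontr)
    assume nx: "nf x \<noteq> 0"
    then have "x \<noteq> 0" by (auto simp: obil_linear)
    then show False using n opow_imaginary[OF x1, of n] nx oone_neq_zero[where 'a='a]
      by (auto split: if_splits)
  qed
next
  assume "nf x = 0"
  then have "opow \<alpha> \<beta> \<gamma> x 2 = 0" using opow_imaginary[OF x1, of 2] by simp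
  then show "onilpotent \<alpha> \<beta> \<gamma> x" by (auto simp: onilpotent_def)
qed

lemma nil_lines_iff:
  assumes T1: "\<And>v. v \<in> T \<Longrightarrow> v $ 1 = 0" and subT: "vec.subspace T"
  shows "L \<in> nil_lines \<alpha> \<beta> \<gamma> T \<longleftrightarrow> (\<exists>u. u \<noteq> 0 \<and> u \<in> T \<and> nf u = 0 \<and> L = vec.span {u})"
proof
  assume "L \<in> nil_lines \<alpha> \<beta> \<gamma> T"
  then have subL: "vec.subspace L" and dimL: "vec.dim L = 1" and LT: "L \<subseteq> T"
    and nilL: "\<forall>x\<in>L. onilpotent \<alpha> \<beta> \<gamma> x" by (auto simp: nil_lines_def)
  obtain B where B: "B \<subseteq> L" "vec.independent B" "L \<subseteq> vec.span B" "card B = vec.dim L"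
    by (rule vec.basis_exists)
  then obtain u where "B = {u}" using dimL by (auto simp: card_1_singleton_iff)
  then have "u \<noteq> 0" "u \<in> L" "L = vec.span {u}" using B vec.span_subspace[of "{u}" L] subL by auto
  moreover have "nf u = 0" using nilL \<open>u \<in> L\<close> LT T1 onilpotent_imaginary_iff by blast
  ultimately show "\<exists>u. u \<noteq> 0 \<and> u \<in> T \<and> nf u = 0 \<and> L = vec.span {u}" using LT by blast
next
  assume "\<exists>u. u \<noteq> 0 \<and> u \<in> T \<and> nf u = 0 \<and> L = vec.span {u}"
  then obtain u where u: "u \<noteq> 0" "u \<in> T" "nf u = 0" and L: "L = vec.span {u}" by blast
  have "vec.dim L = 1" using u(1) by (simp add: L vec.dim_span)
  moreover have "L \<subseteq> T" unfolding L using u(2) subT by (intro vec.span_minimal) auto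
  moreover have "onilpotent \<alpha> \<beta> \<gamma> v" if "v \<in> L" for v
  proof -
    obtain k where "v = k *s u" using \<open>v \<in> L\<close> by (auto simp: L vec.span_singleton)
    then show ?thesis
      using onilpotent_imaginary_iff T1[OF u(2)] u(3) by (simp add: obil_linear)
  qed
  ultimately show "L \<in> nil_lines \<alpha> \<beta> \<gamma> T" by (auto simp: nil_lines_def L)
qed

text \<open>Two distinct isotropic lines span T, and a third isotropic line a u1 + b u2 with
  a b \<noteq> 0 forces bf u1 u2 = 0, so the norm vanishes on all of T.\<close>
lemma three_nil_lines_isotropic:
  assumes two: "(2::'a) \<noteq> 0" and T1: "\<And>v. v \<in> T \<Longrightarrow> v $ 1 = 0" and subT: "vec.subspace T"
    and dimT: "vec.dim T = 2"
    and L: "L1 \<in> nil_lines \<alpha> \<beta> \<gamma> T" "L2 \<in> nil_lines \<alpha> \<beta> \<gamma> T" "L3 \<in> nil_lines \<alpha> \<beta> \<gamma> T"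
    and distinct: "L1 \<noteq> L2" "L1 \<noteq> L3" "L2 \<noteq> L3"
  shows "\<forall>v\<in>T. nf v = 0"
proof -
  note char = nil_lines_iff[OF T1 subT]
  obtain u1 where u1: "u1 \<noteq> 0" "u1 \<in> T" "nf u1 = 0" "L1 = vec.span {u1}" using L(1) char by blast
  obtain u2 where u2: "u2 \<noteq> 0" "u2 \<in> T" "nf u2 = 0" "L2 = vec.span {u2}" using L(2) char by blast
  obtain u3 where u3: "u3 \<noteq> 0" "u3 \<in> T" "nf u3 = 0" "L3 = vec.span {u3}" using L(3) char by blast
  have ind: "lin_indep2 u1 u2" using lin_indep2_of_span_neq u1 u2 distinct(1) by metis
  have T: "T \<subseteq> vec.span {u1, u2}"
    using lin_indep2_independent[OF ind] u1(2) u2(2) dimT by (intro vec.card_ge_dim_independent) auto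
  then obtain a b where u3_eq: "u3 = a *s u1 + b *s u2" using u3(2) span_pair_iff by blast
  have "a \<noteq> 0"
  proof
    assume "a = 0"
    then have "L3 = L2" using u3_eq u3(1,4) u2(4) span_singleton_scale[of b u2] by auto
    then show False using distinct(3) by simp
  qed
  moreover have "b \<noteq> 0"
  proof
    assume "b = 0"
    then have "L3 = L1" using u3_eq u3(1,4) u1(4) span_singleton_scale[of a u1] by auto
    then show False using distinct(2) by simp
  qed
  moreover have "2 * a * b * bf u1 u2 = 0" using u1(3) u2(3) u3(3) onorm_lincomb[of a u1 b u2] u3_eq by simp
  ultimately have "bf u1 u2 = 0" using two by simp
  show ?thesis
  proof
    fix v assume "v \<in> T"
    then obtain c e where "v = c *s u1 + e *s u2" using T span_pair_iff by blast
    then show "nf v = 0" using onorm_lincomb[of c u1 e u2] u1(3) u2(3) \<open>bf u1 u2 = 0\<close> by simp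
  qed
qed

lemma basis_pair_lin_indep2: "basis_pair x y \<Longrightarrow> lin_indep2 x y"
  unfolding basis_pair_def lin_indep4_def lin_indep2_def
  by (metis add.left_neutral add.right_neutral vector_smult_lzero)

lemma basis_pair_no_eigenline:
  assumes x1: "x $ 1 = 0" and y1: "y $ 1 = 0" and basis: "basis_pair x y"
    and u: "u = a *s x + b *s y" "u \<noteq> 0"
    and eigen: "u \<odot> x \<in> vec.span {u}" "u \<odot> y \<in> vec.span {u}"
  shows False
proof (cases "a = 0")
  case False
  obtain k where k: "u \<odot> y = k *s u" using eigen(2) by (auto simp: vec.span_singleton)
  have "(- b * nf y) *s oone + (- k * a) *s x + (- k * b) *s y + a *s (x \<odot> y) = u \<odot> y - k *s u"
    unfolding u by (simp add: omult_linear omult_self_imaginary[OF y1] vec_eq_iff algebra_simps)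
  also have "\<dots> = 0" using k by simp
  finally show False
    using basis[unfolded basis_pair_def lin_indep4_def, rule_format] False by blast
next
  case True
  then have "b \<noteq> 0" using u by auto
  obtain k where k: "u \<odot> x = k *s u" using eigen(1) by (auto simp: vec.span_singleton)
  have "(- 2 * b * bf x y) *s oone + 0 *s x + (- k * b) *s y + (- b) *s (x \<odot> y) = u \<odot> x - k *s u"
    unfolding u using True
    by (simp add: omult_linear omult_swap_imaginary[OF x1 y1] vec_eq_iff algebra_simps)
  also have "\<dots> = 0" using k by simp
  finally show False
    using basis[unfolded basis_pair_def lin_indep4_def, rule_format] \<open>b \<noteq> 0\<close> by fastforce
qed

lemma dim_span_basis_pair:
  assumes "basis_pair x y"
  shows "vec.dim (vec.span {x, y}) = 2"
  using lin_indep2_independent[OF basis_pair_lin_indep2[OF assms]] by (simp add: vec.dim_eq_card_independent)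

lemma basis_pair_not_typeU:
  assumes x1: "x $ 1 = 0" and y1: "y $ 1 = 0" and basis: "basis_pair x y"
  shows "\<not> typeU \<alpha> \<beta> \<gamma> (vec.span {x, y})"
proof
  define T where "T = vec.span {x, y}"
  assume "typeU \<alpha> \<beta> \<gamma> (vec.span {x, y})"
  then obtain u where lines: "nil_lines \<alpha> \<beta> \<gamma> T = {vec.span {u}}"
    and eigen: "\<forall>v\<in>T. u \<odot> v \<in> vec.span {u}" by (auto simp: typeU_def T_def)
  have T1: "v $ 1 = 0" if "v \<in> T" for v using that x1 y1 by (auto simp: T_def span_pair_iff)
  have "vec.span {u} \<in> nil_lines \<alpha> \<beta> \<gamma> T" using lines by simp
  then obtain u' where u': "u' \<noteq> 0" "u' \<in> T" and span_u: "vec.span {u} = vec.span {u'}"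
    using nil_lines_iff[OF T1] by (auto simp: T_def)
  have "u \<in> T"
    using vec.span_base[of u "{u}"] vec.span_minimal[of "{u'}" T] u'(2) span_u by (auto simp: T_def)
  moreover have "u \<noteq> 0" using vec.span_base[of u' "{u'}"] u'(1) span_u by auto
  moreover have "x \<in> T" "y \<in> T" by (auto simp: T_def vec.span_base)
  ultimately show False
    using basis_pair_no_eigenline[OF x1 y1 basis] eigen by (metis T_def span_pair_iff)
qed

lemma basis_pair_types:
  assumes two: "(2::'a) \<noteq> 0" and x1: "x $ 1 = 0" and y1: "y $ 1 = 0" and basis: "basis_pair x y"
  shows "typeQ \<alpha> \<beta> \<gamma> (vec.span {x, y}) \<or> typeM \<alpha> \<beta> \<gamma> (vec.span {x, y}) \<or>
    typeD \<alpha> \<beta> \<gamma> (vec.span {x, y}) \<or> typeJ \<alpha> \<beta> \<gamma> (vec.span {x, y})"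
proof -
  define T where "T = vec.span {x, y}"
  have T1: "v $ 1 = 0" if "v \<in> T" for v using that x1 y1 by (auto simp: T_def span_pair_iff)
  have "x \<odot> y \<noteq> 0"
    using basis[unfolded basis_pair_def lin_indep4_def, rule_format, of 0 0 0 1] by auto
  then have "\<not> typeZ \<alpha> \<beta> \<gamma> T" by (auto simp: typeZ_def T_def vec.span_base)
  show ?thesis
  proof (cases "\<forall>v\<in>T. onilpotent \<alpha> \<beta> \<gamma> v")
    case True
    then show ?thesis using \<open>\<not> typeZ \<alpha> \<beta> \<gamma> T\<close> by (simp add: typeJ_def T_def)
  next
    case False
    then have "\<not> (\<forall>v\<in>T. nf v = 0)" using onilpotent_imaginary_iff T1 by blast
    then have at_most_two: "L3 = L1 \<or> L3 = L2 \<or> L1 = L2"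
      if "L1 \<in> nil_lines \<alpha> \<beta> \<gamma> T" "L2 \<in> nil_lines \<alpha> \<beta> \<gamma> T" "L3 \<in> nil_lines \<alpha> \<beta> \<gamma> T"
      for L1 L2 L3
      using three_nil_lines_isotropic[OF two T1 _ _ that] dim_span_basis_pair[OF basis]
      by (auto simp: T_def)
    have "typeQ \<alpha> \<beta> \<gamma> T \<or> typeD \<alpha> \<beta> \<gamma> T \<or> typeM \<alpha> \<beta> \<gamma> T"
    proof (cases "nil_lines \<alpha> \<beta> \<gamma> T = {}")
      case False
      then obtain L1 where L1: "L1 \<in> nil_lines \<alpha> \<beta> \<gamma> T" by blast
      show ?thesis
      proof (cases "nil_lines \<alpha> \<beta> \<gamma> T = {L1}")
        case True
        then show ?thesis using basis_pair_not_typeU[OF x1 y1 basis] by (auto simp: typeD_def T_def)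
      next
        case False
        then obtain L2 where "L2 \<in> nil_lines \<alpha> \<beta> \<gamma> T" "L2 \<noteq> L1" using L1 by blast
        then have "nil_lines \<alpha> \<beta> \<gamma> T = {L1, L2}" using at_most_two L1 by blast
        then show ?thesis using \<open>L2 \<noteq> L1\<close> by (auto simp: typeM_def)
      qed
    qed (simp add: typeQ_def)
    then show ?thesis by (auto simp: T_def)
  qed
qed

lemma gen_subalgebra_basis_pair:
  assumes sub: "is_subalgebra \<alpha> \<beta> \<gamma> H" and dimH: "vec.dim H = 4"
    and x: "x \<in> H" and y: "y \<in> H" and basis: "basis_pair x y"
  shows "gen_subalgebra \<alpha> \<beta> \<gamma> (vec.span {x, y}) = H"
proof
  have subH: "vec.subspace H" and oneH: "oone \<in> H" and xyH: "x \<odot> y \<in> H"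
    using sub x y by (auto simp: is_subalgebra_def)
  have "vec.span {x, y} \<subseteq> H" using subH x y by (intro vec.span_minimal) auto
  then show "gen_subalgebra \<alpha> \<beta> \<gamma> (vec.span {x, y}) \<subseteq> H"
    unfolding gen_subalgebra_def using sub by (intro Inter_lower) simp
  have H: "H \<subseteq> vec.span {oone, x, y, x \<odot> y}"
    using lin_indep4_independent[OF basis[unfolded basis_pair_def]] oneH x y xyH dimH
    by (intro vec.card_ge_dim_independent) auto
  show "H \<subseteq> gen_subalgebra \<alpha> \<beta> \<gamma> (vec.span {x, y})"
    unfolding gen_subalgebra_def
  proof (rule Inter_greatest)
    fix S assume "S \<in> {S. is_subalgebra \<alpha> \<beta> \<gamma> S \<and> vec.span {x, y} \<subseteq> S}"
    then have subS: "is_subalgebra \<alpha> \<beta> \<gamma> S" and "x \<in> S" "y \<in> S" by (auto simp: vec.span_base)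
    then have "vec.span {oone, x, y, x \<odot> y} \<subseteq> S"
      by (intro vec.span_minimal) (auto simp: is_subalgebra_def)
    then show "H \<subseteq> S" using H by blast
  qed
qed

end

theorem mainTheorem14:
  fixes \<alpha> \<beta> \<gamma> :: "'a::field" and H :: "('a ^ 8) set"
  assumes char: "(2::'a) \<noteq> 0"
    and params: "\<alpha> \<noteq> 0" "\<beta> \<noteq> 0" "\<gamma> \<noteq> 0"
    and sub: "is_subalgebra \<alpha> \<beta> \<gamma> H"
    and dimH: "vec.dim H = 4"
  shows "\<exists>T. vec.subspace T \<and> vec.dim T = 2 \<and> T \<subseteq> oim H \<and>
     (typeQ \<alpha> \<beta> \<gamma> T \<or> typeM \<alpha> \<beta> \<gamma> T \<or> typeD \<alpha> \<beta> \<gamma> T \<or> typeJ \<alpha> \<beta> \<gamma> T) \<and>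
     H = gen_subalgebra \<alpha> \<beta> \<gamma> T"
proof -
  interpret cayley \<alpha> \<beta> \<gamma> .
  obtain x y where x: "x \<in> oim H" and y: "y \<in> oim H" and basis: "basis_pair x y"
    using exists_basis_pair[OF params char sub dimH] .
  then have "x \<in> H" "x $ 1 = 0" "y \<in> H" "y $ 1 = 0" using oim_iff[OF char] by auto
  moreover have "vec.span {x, y} \<subseteq> oim H"
    using x y oim_subspace[OF char sub] by (intro vec.span_minimal) auto
  ultimately show ?thesis
    using dim_span_basis_pair[OF basis] basis_pair_types[OF char _ _ basis]
      gen_subalgebra_basis_pair[OF sub dimH _ _ basis]
    by (intro exI[of _ "vec.span {x, y}"]) auto
qed

end
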